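(* Let $\mathcal M$ be a general model for CTT$_{\rm qe}$, let $\mathbf A_\alpha,\mathbf B_\alpha$ be expressions of the same type, and let $\mathbf C_o$ be a formula. Let $\mathbf C'_o$ be the result of replacing one occurrence of $\mathbf A_\alpha$ in $\mathbf C_o$ by an occurrence of $\mathbf B_\alpha$, where this occurrence of $\mathbf A_\alpha$ is not within a quotation, is not the bound-variable position $\mathbf x$ of an abstraction $\lambda\mathbf x.\mathbf D$, and is not the type-indicating second component $\mathbf E_\beta$ of an evaluation $[\![\mathbf D_\epsilon]\!]_{\mathbf E_\beta}$. If $\mathcal M\models\mathbf A_\alpha=\mathbf B_\alpha$ and $\mathcal M\models\mathbf C_o$, then $\mathcal M\models\mathbf C'_o$.
   Context: The logic CTT$_{\rm qe}$. Types: $\iota$ (individuals), $o$ (truth values), $\epsilon$ (constructions), and $(\alpha\to\beta)$ for types $\alpha,\beta$. Let $\mathcal V$ be a set of typed symbols (variables) containing denumerably many symbols $\mathbf{x}_\alpha$ of each type $\alpha$, and $\mathcal C$ a disjoint set of typed symbols (constants) containing the logical constants $=_{\alpha\to\alpha\to o}$ (each $\alpha$), $\mathsf{is\text{-}var}_{\epsilon\to o}$, $\mathsf{is\text{-}var}^\alpha_{\epsilon\to o}$, $\mathsf{is\text{-}con}_{\epsilon\to o}$, $\mathsf{is\text{-}con}^\alpha_{\epsilon\to o}$, $\mathsf{app}_{\epsilon\to\epsilon\to\epsilon}$, $\mathsf{abs}_{\epsilon\to\epsilon\to\epsilon}$, $\mathsf{quo}_{\epsilon\to\epsilon}$, $\mathsf{is\text{-}expr}_{\epsilon\to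 o}$, $\mathsf{is\text{-}expr}^\alpha_{\epsilon\to o}$ (each $\alpha$), $\sqsubset_{\epsilon\to\epsilon\to o}$, $\mathsf{is\text{-}free\text{-}in}_{\epsilon\to\epsilon\to o}$. Expressions $\mathbf{A}_\alpha$ (subscript = type) are defined inductively: (1) a variable $\mathbf{x}_\alpha$; (2) a constant $\mathbf{c}_\alpha$; (3) application $(\mathbf{F}_{\alpha\to\beta}\,\mathbf{A}_\alpha)$ of type $\beta$; (4) abstraction $(\lambda\mathbf{x}_\alpha.\mathbf{B}_\beta)$ of type $\alpha\to\beta$; (5) quotation $\ulcorner\mathbf{A}_\alpha\urcorner$ of type $\epsilon$, formed only if $\mathbf{A}_\alpha$ is eval-free; (6) evaluation $[\![\mathbf{A}_\epsilon]\!]_{\mathbf{B}_\beta}$ of type $\beta$, written $[\![\mathbf{A}_\epsilon]\!]_\beta$ (the second component only fixes the type). An expression is eval-free if built using rules (1)–(5) only. A formula is an expression of type $o$. In an eval-free expression, an occurrence of a variable $\mathbf{x}_\alpha$ is free if it is not inside a quotation and not inside a subexpression of the form $\lambda\mathbf{x}_\alpha.\mathbf{C}$; $\mathbf{x}_\alpha$ is free in $\mathbf{B}$ if it has a free occurrence there. Constructions: the smallest set of expressions of type $\epsilon$ containing all $\ulcorner\mathbf{x}_\alpha\urcorner$ and $\ulcorner\mathbf{c}_\alpha\urcorner$ and closed under forming $\mathsf{app}\,\mathbf{A}_\epsilon\,\mathbf{B}_\epsilon$, $\mathsf{abs}\,\mathbf{A}_\epsilon\,\mathbf{B}_\epsilon$,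 $\mathsf{quo}\,\mathbf{A}_\epsilon$. The injective map $\mathcal E$ from eval-free expressions to constructions: $\mathcal E(\mathbf{x}_\alpha)=\ulcorner\mathbf{x}_\alpha\urcorner$, $\mathcal E(\mathbf{c}_\alpha)=\ulcorner\mathbf{c}_\alpha\urcorner$, $\mathcal E(\mathbf{F}\,\mathbf{A})=\mathsf{app}\,\mathcal E(\mathbf F)\,\mathcal E(\mathbf A)$, $\mathcal E(\lambda\mathbf{x}_\alpha.\mathbf B)=\mathsf{abs}\,\mathcal E(\mathbf x_\alpha)\,\mathcal E(\mathbf B)$, $\mathcal E(\ulcorner\mathbf A\urcorner)=\mathsf{quo}\,\mathcal E(\mathbf A)$. Abbreviations: $\mathbf A_\alpha=\mathbf B_\alpha$ is $=_{\alpha\to\alpha\to o}\mathbf A_\alpha\mathbf B_\alpha$; $T_o$ is $(=_{o\to o\to o}\,=\,=_{o\to o\to o})$; $F_o$ is $(\lambda x_o.T_o)=(\lambda x_o.x_o)$; $\forall\mathbf x_\alpha.\mathbf A_o$ is $(\lambda\mathbf x_\alpha.T_o)=(\lambda\mathbf x_\alpha.\mathbf A_o)$; $\neg\mathbf A_o$ is $=_{o\to o\to o}F_o\,\mathbf A_o$; $\exists\mathbf x_\alpha.\mathbf A_o$ is $\neg\forall\mathbf x_\alpha.\neg\mathbf A_o$; $\mathbf A\neq\mathbf B$ is $\neg(\mathbf A=\mathbf B)$; $\mathsf{IS\text{-}EFFECTIVE\text{-}IN}(\mathbf x_\alpha,\mathbf B_\beta)$ is $\exists\mathbf y_\alpha.((\lambda\mathbf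 x_\alpha.\mathbf B_\beta)\,\mathbf y_\alpha\neq\mathbf B_\beta)$ for a variable $\mathbf y_\alpha$ distinct from $\mathbf x_\alpha$. Semantics. A frame is $\{D_\alpha\}$ with $D_\iota$ nonempty, $D_o=\{\mathrm T,\mathrm F\}$, $D_\epsilon$ the set of all constructions, and $D_{\alpha\to\beta}$ some set of total functions $D_\alpha\to D_\beta$. An interpretation $(\{D_\alpha\},I)$ has $I(\mathbf c_\alpha)\in D_\alpha$ for each constant, with: $I(=_{\alpha\to\alpha\to o})$ the (curried) identity relation on $D_\alpha$; $I(\mathsf{is\text{-}var})(A)=\mathrm T$ iff $A=\ulcorner\mathbf x_\beta\urcorner$ for some variable of some type; $I(\mathsf{is\text{-}var}^\alpha)(A)=\mathrm T$ iff $A=\ulcorner\mathbf x_\alpha\urcorner$ for some variable of type $\alpha$; likewise $\mathsf{is\text{-}con}$, $\mathsf{is\text{-}con}^\alpha$ with constants; $I(\mathsf{app})(A)(B)$, $I(\mathsf{abs})(A)(B)$, $I(\mathsf{quo})(A)$ are the constructions $\mathsf{app}\,A\,B$, $\mathsf{abs}\,A\,B$, $\mathsf{quo}\,A$; $I(\mathsf{is\text{-}expr})(A)=\mathrm T$ iff $A=\mathcal E(\mathbf B_\beta)$ for some eval-free $\mathbf B_\beta$ of some type; $I(\mathsf{is\text{-}expr}^\alpha)(A)=\mathrm T$ iff $A=\mathcal E(\mathbf B_\alpha)$ for some eval-free $\mathbf B_\alpha$; $I(\sqsubset)(A)(B)=\mathrm T$ iff $A$ is a proper subexpression of $B$; $I(\mathsf{is\text{-}free\text{-}in})(A)(B)=\mathrm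 T$ iff $A=\ulcorner\mathbf x_\alpha\urcorner$, $B=\mathcal E(\mathbf C_\beta)$ for some eval-free $\mathbf C_\beta$, and $\mathbf x_\alpha$ is free in $\mathbf C_\beta$. An assignment $\phi$ maps each $\mathbf x_\alpha\in\mathcal V$ into $D_\alpha$; $\phi[\mathbf x_\alpha\mapsto d]$ is the usual modification. A general model is an interpretation $\mathcal M$ for which there is a valuation $V^{\mathcal M}_\phi(\mathbf C_\gamma)\in D_\gamma$ (for all $\phi$ and all expressions) with: (V1) $V_\phi(\mathbf x_\alpha)=\phi(\mathbf x_\alpha)$; (V2) $V_\phi(\mathbf c_\alpha)=I(\mathbf c_\alpha)$; (V3) $V_\phi(\mathbf F\,\mathbf A)=V_\phi(\mathbf F)(V_\phi(\mathbf A))$; (V4) $V_\phi(\lambda\mathbf x_\alpha.\mathbf B_\beta)$ is the $f\in D_{\alpha\to\beta}$ with $f(d)=V_{\phi[\mathbf x_\alpha\mapsto d]}(\mathbf B_\beta)$; (V5) $V_\phi(\ulcorner\mathbf A_\alpha\urcorner)=\mathcal E(\mathbf A_\alpha)$; (V6) if $V_\phi(\mathsf{is\text{-}expr}^\beta\,\mathbf A_\epsilon)=\mathrm T$ then $V_\phi([\![\mathbf A_\epsilon]\!]_\beta)=V_\phi(\mathcal E^{-1}(V_\phi(\mathbf A_\epsilon)))$; (V7) for each $\beta$ there is a fixed $d_\beta\in D_\beta$ such that $V_\phi([\![\mathbf A_\epsilon]\!]_\beta)=d_\beta$ whenever $V_\phi(\mathsf{is\text{-}expr}^\beta\,\mathbf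 A_\epsilon)=\mathrm F$. $\mathcal M\models\mathbf A_o$ ($\mathbf A_o$ valid in $\mathcal M$) iff $V_\phi(\mathbf A_o)=\mathrm T$ for all $\phi$; $\models\mathbf A_o$ (valid in CTT$_{\rm qe}$) iff valid in every general model. A standard model is an interpretation in which every $D_{\alpha\to\beta}$ is the set of all total functions $D_\alpha\to D_\beta$. *)

theory Defs
  imports Main
begin

datatype ty = Iota | Omic | Eps | Fun ty ty

text \<open>Constants: the logical constants, plus denumerably many nonlogical
  constants of each type.\<close>
datatype con =
    Eq ty | IsVar | IsVarT ty | IsCon | IsConT ty
  | AppC | AbsC | QuoC | IsExpr | IsExprT ty
  | SubC | IsFreeIn | Other nat ty

fun ctype :: "con \<Rightarrow> ty" where
  "ctype (Eq a) = Fun a (Fun a Omic)"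
| "ctype IsVar = Fun Eps Omic"
| "ctype (IsVarT a) = Fun Eps Omic"
| "ctype IsCon = Fun Eps Omic"
| "ctype (IsConT a) = Fun Eps Omic"
| "ctype AppC = Fun Eps (Fun Eps Eps)"
| "ctype AbsC = Fun Eps (Fun Eps Eps)"
| "ctype QuoC = Fun Eps Eps"
| "ctype IsExpr = Fun Eps Omic"
| "ctype (IsExprT a) = Fun Eps Omic"
| "ctype SubC = Fun Eps (Fun Eps Omic)"
| "ctype IsFreeIn = Fun Eps (Fun Eps Omic)"
| "ctype (Other n a) = a"

text \<open>Raw expressions. A variable is a pair (name, type). Eval A E
  is the evaluation with type-indicating second component E.\<close>
datatype expr =
    Var nat ty
  | Con con
  | Ap expr expr
  | Lam nat ty expr
  | Quote expr
  | Eval expr expr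

fun evalfree :: "expr \<Rightarrow> bool" where
  "evalfree (Var x a) = True"
| "evalfree (Con c) = True"
| "evalfree (Ap F A) = (evalfree F \<and> evalfree A)"
| "evalfree (Lam x a B) = evalfree B"
| "evalfree (Quote A) = evalfree A"
| "evalfree (Eval A E) = False"

inductive wt :: "expr \<Rightarrow> ty \<Rightarrow> bool" where
  wt_var: "wt (Var x a) a"
| wt_con: "wt (Con c) (ctype c)"
| wt_ap: "wt F (Fun a b) \<Longrightarrow> wt A a \<Longrightarrow> wt (Ap F A) b"
| wt_lam: "wt B b \<Longrightarrow> wt (Lam x a B) (Fun a b)"
| wt_quote: "wt A a \<Longrightarrow> evalfree A \<Longrightarrow> wt (Quote A) Eps"
| wt_eval: "wt A Eps \<Longrightarrow> wt E b \<Longrightarrow> wt (Eval A E) b"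

text \<open>Free occurrence of variable (x,a) in an eval-free expression.\<close>
fun free_in :: "nat \<Rightarrow> ty \<Rightarrow> expr \<Rightarrow> bool" where
  "free_in x a (Var y b) = (x = y \<and> a = b)"
| "free_in x a (Con c) = False"
| "free_in x a (Ap F A) = (free_in x a F \<or> free_in x a A)"
| "free_in x a (Lam y b B) = ((y, b) \<noteq> (x, a) \<and> free_in x a B)"
| "free_in x a (Quote A) = False"
| "free_in x a (Eval A E) = False"

fun subexprs :: "expr \<Rightarrow> expr set" where
  "subexprs (Var x a) = {Var x a}"
| "subexprs (Con c) = {Con c}"
| "subexprs (Ap F A) = insert (Ap F A) (subexprs F \<union> subexprs A)"
| "subexprs (Lam x a B) = insert (Lam x a B) (insert (Var x a) (subexprs B))"
| "subexprs (Quote A) = insert (Quote A) (subexprs A)"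
| "subexprs (Eval A E) = insert (Eval A E) (subexprs A \<union> subexprs E)"

definition proper_subexpr :: "expr \<Rightarrow> expr \<Rightarrow> bool" where
  "proper_subexpr A B \<longleftrightarrow> A \<in> subexprs B \<and> A \<noteq> B"

inductive is_constr :: "expr \<Rightarrow> bool" where
  "is_constr (Quote (Var x a))"
| "is_constr (Quote (Con c))"
| "is_constr A \<Longrightarrow> is_constr B \<Longrightarrow> is_constr (Ap (Ap (Con AppC) A) B)"
| "is_constr A \<Longrightarrow> is_constr B \<Longrightarrow> is_constr (Ap (Ap (Con AbsC) A) B)"
| "is_constr A \<Longrightarrow> is_constr (Ap (Con QuoC) A)"

fun enc :: "expr \<Rightarrow> expr" where
  "enc (Var x a) = Quote (Var x a)"
| "enc (Con c) = Quote (Con c)"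
| "enc (Ap F A) = Ap (Ap (Con AppC) (enc F)) (enc A)"
| "enc (Lam x a B) = Ap (Ap (Con AbsC) (enc (Var x a))) (enc B)"
| "enc (Quote A) = Ap (Con QuoC) (enc A)"
| "enc (Eval A E) = undefined"  \<comment> \<open>never used: E is only applied to eval-free expressions\<close>

definition enc_inv :: "expr \<Rightarrow> expr" where
  "enc_inv C = (THE B. evalfree B \<and> enc B = C)"

text \<open>A structure over a universe type 'u: domains Dom, an application
  operation ap giving the functions in the function domains, an injection
  tv of truth values, an injection emb of constructions, the
  interpretation I of constants, and the valuation V.\<close>
record 'u model =
  Dom :: "ty \<Rightarrow> 'u set"
  ap :: "'u \<Rightarrow> 'u \<Rightarrow> 'u"
  tv :: "bool \<Rightarrow> 'u"
  emb :: "expr \<Rightarrow> 'u"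
  Icon :: "con \<Rightarrow> 'u"
  Val :: "(nat \<times> ty \<Rightarrow> 'u) \<Rightarrow> expr \<Rightarrow> 'u"

definition frame :: "'u model \<Rightarrow> bool" where
  "frame M \<longleftrightarrow>
     Dom M Iota \<noteq> {}
   \<and> inj (tv M) \<and> Dom M Omic = range (tv M)
   \<and> inj_on (emb M) {A. is_constr A} \<and> Dom M Eps = emb M ` {A. is_constr A}
   \<and> (\<forall>a b. \<forall>f\<in>Dom M (Fun a b). \<forall>x\<in>Dom M a. ap M f x \<in> Dom M b)
   \<and> (\<forall>a b. \<forall>f\<in>Dom M (Fun a b). \<forall>g\<in>Dom M (Fun a b).
        (\<forall>x\<in>Dom M a. ap M f x = ap M g x) \<longrightarrow> f = g)"

abbreviation ap2 :: "'u model \<Rightarrow> 'u \<Rightarrow> 'u \<Rightarrow> 'u \<Rightarrow> 'u" where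
  "ap2 M f x y \<equiv> ap M (ap M f x) y"

definition interp :: "'u model \<Rightarrow> bool" where
  "interp M \<longleftrightarrow>
     frame M
   \<and> (\<forall>c. Icon M c \<in> Dom M (ctype c))
   \<and> (\<forall>a. \<forall>x\<in>Dom M a. \<forall>y\<in>Dom M a. ap2 M (Icon M (Eq a)) x y = tv M (x = y))
   \<and> (\<forall>A. is_constr A \<longrightarrow>
        ap M (Icon M IsVar) (emb M A) = tv M (\<exists>x b. A = Quote (Var x b))
      \<and> (\<forall>a. ap M (Icon M (IsVarT a)) (emb M A) = tv M (\<exists>x. A = Quote (Var x a)))
      \<and> ap M (Icon M IsCon) (emb M A) = tv M (\<exists>c. A = Quote (Con c))
      \<and> (\<forall>a. ap M (Icon M (IsConT a)) (emb M A) = tv M (\<exists>c. ctype c = a \<and> A = Quote (Con c)))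
      \<and> ap M (Icon M QuoC) (emb M A) = emb M (Ap (Con QuoC) A)
      \<and> ap M (Icon M IsExpr) (emb M A) = tv M (\<exists>B b. wt B b \<and> evalfree B \<and> A = enc B)
      \<and> (\<forall>a. ap M (Icon M (IsExprT a)) (emb M A) = tv M (\<exists>B. wt B a \<and> evalfree B \<and> A = enc B))
      \<and> (\<forall>B. is_constr B \<longrightarrow>
           ap2 M (Icon M AppC) (emb M A) (emb M B) = emb M (Ap (Ap (Con AppC) A) B)
         \<and> ap2 M (Icon M AbsC) (emb M A) (emb M B) = emb M (Ap (Ap (Con AbsC) A) B)
         \<and> ap2 M (Icon M SubC) (emb M A) (emb M B) = tv M (proper_subexpr A B)
         \<and> ap2 M (Icon M IsFreeIn) (emb M A) (emb M B) =
             tv M (\<exists>x a C b. A = Quote (Var x a) \<and> wt C b \<and> evalfree C \<and> B = enc C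
                              \<and> free_in x a C)))"

definition assignment :: "'u model \<Rightarrow> (nat \<times> ty \<Rightarrow> 'u) \<Rightarrow> bool" where
  "assignment M \<phi> \<longleftrightarrow> (\<forall>x a. \<phi> (x, a) \<in> Dom M a)"

text \<open>General model: an interpretation together with a valuation satisfying (V1)-(V7).\<close>
definition general_model :: "'u model \<Rightarrow> bool" where
  "general_model M \<longleftrightarrow>
     interp M
   \<and> (\<forall>\<phi>. assignment M \<phi> \<longrightarrow>
        (\<forall>C g. wt C g \<longrightarrow> Val M \<phi> C \<in> Dom M g)
      \<and> (\<forall>x a. Val M \<phi> (Var x a) = \<phi> (x, a))
      \<and> (\<forall>c. Val M \<phi> (Con c) = Icon M c)
      \<and> (\<forall>F A a b. wt F (Fun a b) \<longrightarrow> wt A a \<longrightarrow>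
           Val M \<phi> (Ap F A) = ap M (Val M \<phi> F) (Val M \<phi> A))
      \<and> (\<forall>x a B b. wt B b \<longrightarrow>
           (\<forall>d\<in>Dom M a. ap M (Val M \<phi> (Lam x a B)) d = Val M (\<phi>((x, a) := d)) B))
      \<and> (\<forall>A a. wt A a \<longrightarrow> evalfree A \<longrightarrow> Val M \<phi> (Quote A) = emb M (enc A))
      \<and> (\<forall>A E b. wt A Eps \<longrightarrow> wt E b \<longrightarrow>
           Val M \<phi> (Ap (Con (IsExprT b)) A) = tv M True \<longrightarrow>
           Val M \<phi> (Eval A E) =
             Val M \<phi> (enc_inv (the_inv_into {B. is_constr B} (emb M) (Val M \<phi> A)))))
   \<and> (\<exists>d. (\<forall>b. d b \<in> Dom M b)
        \<and> (\<forall>\<phi> A E b. assignment M \<phi> \<longrightarrow> wt A Eps \<longrightarrow> wt E b \<longrightarrow>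
             Val M \<phi> (Ap (Con (IsExprT b)) A) = tv M False \<longrightarrow>
             Val M \<phi> (Eval A E) = d b))"

definition valid_in :: "'u model \<Rightarrow> expr \<Rightarrow> bool" where
  "valid_in M C \<longleftrightarrow> (\<forall>\<phi>. assignment M \<phi> \<longrightarrow> Val M \<phi> C = tv M True)"

abbreviation eq_expr :: "ty \<Rightarrow> expr \<Rightarrow> expr \<Rightarrow> expr" where
  "eq_expr a A B \<equiv> Ap (Ap (Con (Eq a)) A) B"

text \<open>One-hole contexts whose hole is not inside a quotation, not the bound
  variable of an abstraction (not an expression position here), and not the
  type-indicating second component of an evaluation.\<close>
datatype ctxt =
    Hole
  | CApL ctxt expr
  | CApR expr ctxt
  | CLam nat ty ctxt
  | CEvalL ctxt expr

fun fill :: "ctxt \<Rightarrow> expr \<Rightarrow> expr" where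
  "fill Hole X = X"
| "fill (CApL K A) X = Ap (fill K X) A"
| "fill (CApR F K) X = Ap F (fill K X)"
| "fill (CLam x a K) X = Lam x a (fill K X)"
| "fill (CEvalL K E) X = Eval (fill K X) E"

end

theory Submission
  imports Defs
begin

text \<open>By induction on the context, the value of fill K A depends only on the value
  of A under all assignments: the abstraction case uses extensionality of function
  domains, and the evaluation case uses that (V6) and (V7) determine the value of an
  evaluation from the value of its first component alone.\<close>

inductive_cases wt_VarE: "wt (Var x a) t"
inductive_cases wt_ConE: "wt (Con c) t"
inductive_cases wt_ApE: "wt (Ap F A) t"
inductive_cases wt_LamE: "wt (Lam x a B) t"
inductive_cases wt_QuoteE: "wt (Quote A) t"
inductive_cases wt_EvalE: "wt (Eval A E) t"

lemma wt_unique: "wt C t \<Longrightarrow> wt C t' \<Longrightarrow> t = t'"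
proof (induction C t arbitrary: t' rule: wt.induct)
  case (wt_ap F a b A)
  then obtain a' where "wt F (Fun a' t')" by (blast elim: wt_ApE)
  then show ?case using wt_ap.IH(1) by blast
next
  case (wt_lam B b x a)
  then show ?case by (blast elim: wt_LamE)
next
  case (wt_eval A E b)
  then show ?case by (blast elim: wt_EvalE)
qed (blast elim: wt_VarE wt_ConE wt_QuoteE)+

lemma wt_fill_subst:
  assumes "wt (fill K A) t" and "wt A a" and "wt B a"
  shows "wt (fill K B) t"
  using assms(1)
proof (induction K arbitrary: t)
  case Hole
  then show ?case using assms(2,3) wt_unique by fastforce
qed (auto elim!: wt_ApE wt_LamE wt_EvalE intro: wt.intros)

lemma assignment_upd:
  "assignment M \<phi> \<Longrightarrow> d \<in> Dom M a \<Longrightarrow> assignment M (\<phi>((x, a) := d))"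
  unfolding assignment_def by auto

context
  fixes M :: "'u model"
  assumes gm: "general_model M"
begin

lemma general_model_interp: "interp M"
  using gm unfolding general_model_def by blast

lemma general_model_frame: "frame M"
  using general_model_interp unfolding interp_def by blast

lemma tv_inj: "inj (tv M)"
  using general_model_frame unfolding frame_def by blast

lemma Dom_Omic: "Dom M Omic = range (tv M)"
  using general_model_frame unfolding frame_def by blast

lemma Dom_Fun_ext:
  "f \<in> Dom M (Fun a b) \<Longrightarrow> g \<in> Dom M (Fun a b) \<Longrightarrow> (\<And>d. d \<in> Dom M a \<Longrightarrow> ap M f d = ap M g d)
    \<Longrightarrow> f = g"
  using general_model_frame unfolding frame_def by blast

lemma Icon_Eq:
  "x \<in> Dom M a \<Longrightarrow> y \<in> Dom M a \<Longrightarrow> ap2 M (Icon M (Eq a)) x y = tv M (x = y)"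
  using general_model_interp unfolding interp_def by blast

context
  fixes \<phi>
  assumes \<phi>: "assignment M \<phi>"
begin

lemma Val_in_Dom: "wt C g \<Longrightarrow> Val M \<phi> C \<in> Dom M g"
  using gm \<phi> unfolding general_model_def by meson

lemma Val_Con: "Val M \<phi> (Con c) = Icon M c"
  using gm \<phi> unfolding general_model_def by meson

lemma Val_Ap: "wt F (Fun a b) \<Longrightarrow> wt A a \<Longrightarrow> Val M \<phi> (Ap F A) = ap M (Val M \<phi> F) (Val M \<phi> A)"
  using gm \<phi> unfolding general_model_def by meson

lemma Val_Lam_ap:
  "wt B b \<Longrightarrow> d \<in> Dom M a \<Longrightarrow> ap M (Val M \<phi> (Lam x a B)) d = Val M (\<phi>((x, a) := d)) B"
  using gm \<phi> unfolding general_model_def by meson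

lemma Val_Eval_is_expr:
  "wt A Eps \<Longrightarrow> wt E b \<Longrightarrow> Val M \<phi> (Ap (Con (IsExprT b)) A) = tv M True \<Longrightarrow>
   Val M \<phi> (Eval A E) = Val M \<phi> (enc_inv (the_inv_into {B. is_constr B} (emb M) (Val M \<phi> A)))"
  using gm \<phi> unfolding general_model_def by meson

lemma Val_eq_expr:
  assumes "wt A a" and "wt B a"
  shows "Val M \<phi> (eq_expr a A B) = tv M (Val M \<phi> A = Val M \<phi> B)"
proof -
  have wt_Eq: "wt (Con (Eq a)) (Fun a (Fun a Omic))"
    using wt_con[of "Eq a"] by simp
  then have "wt (Ap (Con (Eq a)) A) (Fun a Omic)"
    using assms(1) by (rule wt_ap)
  then have "Val M \<phi> (eq_expr a A B) = ap2 M (Icon M (Eq a)) (Val M \<phi> A) (Val M \<phi> B)"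
    using Val_Ap[OF _ assms(2)] Val_Ap[OF wt_Eq assms(1)] Val_Con by simp
  also have "\<dots> = tv M (Val M \<phi> A = Val M \<phi> B)"
    using Icon_Eq Val_in_Dom assms by blast
  finally show ?thesis .
qed

end

lemma Val_Eval_not_is_expr:
  "\<exists>d. \<forall>\<phi> A E b. assignment M \<phi> \<longrightarrow> wt A Eps \<longrightarrow> wt E b \<longrightarrow>
     Val M \<phi> (Ap (Con (IsExprT b)) A) = tv M False \<longrightarrow> Val M \<phi> (Eval A E) = d b"
  using gm unfolding general_model_def by meson

lemma valid_eq_expr_Val_eq:
  assumes "valid_in M (eq_expr a A B)" and "wt A a" and "wt B a" and "assignment M \<phi>"
  shows "Val M \<phi> A = Val M \<phi> B"
  using assms Val_eq_expr[of \<phi> A a B] tv_inj unfolding valid_in_def by (auto dest: injD)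

lemma Val_Lam_cong:
  assumes \<phi>: "assignment M \<phi>" and "wt B b" and "wt B' b"
    and "\<And>d. d \<in> Dom M a \<Longrightarrow> Val M (\<phi>((x, a) := d)) B = Val M (\<phi>((x, a) := d)) B'"
  shows "Val M \<phi> (Lam x a B) = Val M \<phi> (Lam x a B')"
proof (rule Dom_Fun_ext)
  show "Val M \<phi> (Lam x a B) \<in> Dom M (Fun a b)" "Val M \<phi> (Lam x a B') \<in> Dom M (Fun a b)"
    using assms(2,3) by (auto intro: Val_in_Dom[OF \<phi>] wt_lam)
  show "ap M (Val M \<phi> (Lam x a B)) d = ap M (Val M \<phi> (Lam x a B')) d" if "d \<in> Dom M a" for d
    using that assms(2-4) Val_Lam_ap[OF \<phi>] by simp
qed

lemma Val_Eval_cong: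
  assumes \<phi>: "assignment M \<phi>" and wt_D: "wt D Eps" and wt_D': "wt D' Eps" and wt_E: "wt E b"
    and eq: "Val M \<phi> D = Val M \<phi> D'"
  shows "Val M \<phi> (Eval D E) = Val M \<phi> (Eval D' E)"
proof -
  have wt_IsExprT: "wt (Con (IsExprT b)) (Fun Eps Omic)"
    using wt_con[of "IsExprT b"] by simp
  have same_test: "Val M \<phi> (Ap (Con (IsExprT b)) D) = Val M \<phi> (Ap (Con (IsExprT b)) D')"
    using Val_Ap[OF \<phi> wt_IsExprT wt_D] Val_Ap[OF \<phi> wt_IsExprT wt_D'] eq by simp
  have "Val M \<phi> (Ap (Con (IsExprT b)) D) \<in> Dom M Omic"
    using Val_in_Dom[OF \<phi>] wt_ap[OF wt_IsExprT wt_D] by blast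
  then obtain v where v: "Val M \<phi> (Ap (Con (IsExprT b)) D) = tv M v"
    using Dom_Omic by auto
  show ?thesis
  proof (cases v)
    case True
    then show ?thesis
      using Val_Eval_is_expr[OF \<phi> wt_D wt_E] Val_Eval_is_expr[OF \<phi> wt_D' wt_E] v same_test eq
      by simp
  next
    case False
    obtain d where "\<forall>\<phi> A E b. assignment M \<phi> \<longrightarrow> wt A Eps \<longrightarrow> wt E b \<longrightarrow>
        Val M \<phi> (Ap (Con (IsExprT b)) A) = tv M False \<longrightarrow> Val M \<phi> (Eval A E) = d b"
      using Val_Eval_not_is_expr by blast
    then have "Val M \<phi> (Eval D E) = d b" "Val M \<phi> (Eval D' E) = d b"
      using \<phi> wt_D wt_D' wt_E v False same_test by simp_all
    then show ?thesis by simp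
  qed
qed

lemma Val_fill_cong:
  assumes "wt A a" and "wt B a"
    and AB: "\<And>\<psi>. assignment M \<psi> \<Longrightarrow> Val M \<psi> A = Val M \<psi> B"
  shows "wt (fill K A) t \<Longrightarrow> assignment M \<phi> \<Longrightarrow> Val M \<phi> (fill K A) = Val M \<phi> (fill K B)"
proof (induction K arbitrary: t \<phi>)
  case Hole
  then show ?case using AB by simp
next
  case (CApL K E)
  then obtain c where wt_KA: "wt (fill K A) (Fun c t)" and wt_E: "wt E c"
    by (auto elim!: wt_ApE)
  then show ?case
    using CApL.IH[OF wt_KA CApL.prems(2)] Val_Ap[OF CApL.prems(2) wt_KA wt_E]
      Val_Ap[OF CApL.prems(2) wt_fill_subst[OF wt_KA assms(1,2)] wt_E] by simp
next
  case (CApR F K)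
  then obtain c where wt_F: "wt F (Fun c t)" and wt_KA: "wt (fill K A) c"
    by (auto elim!: wt_ApE)
  then show ?case
    using CApR.IH[OF wt_KA CApR.prems(2)] Val_Ap[OF CApR.prems(2) wt_F wt_KA]
      Val_Ap[OF CApR.prems(2) wt_F wt_fill_subst[OF wt_KA assms(1,2)]] by simp
next
  case (CLam x b K)
  then obtain c where wt_KA: "wt (fill K A) c"
    by (auto elim!: wt_LamE)
  show ?case
    unfolding fill.simps
  proof (rule Val_Lam_cong[OF CLam.prems(2) wt_KA wt_fill_subst[OF wt_KA assms(1,2)]])
    fix d assume "d \<in> Dom M b"
    then show "Val M (\<phi>((x, b) := d)) (fill K A) = Val M (\<phi>((x, b) := d)) (fill K B)"
      using CLam.IH[OF wt_KA assignment_upd[OF CLam.prems(2)]] by blast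
  qed
next
  case (CEvalL K E)
  then have wt_KA: "wt (fill K A) Eps" and "wt E t"
    by (auto elim!: wt_EvalE)
  then show ?case
    using Val_Eval_cong[OF CEvalL.prems(2) wt_KA wt_fill_subst[OF wt_KA assms(1,2)]]
      CEvalL.IH[OF wt_KA CEvalL.prems(2)] by simp
qed

end

theorem mainTheorem12:
  fixes M :: "'u model" and A B :: expr and a :: ty and K :: ctxt
  assumes "general_model M"
    and "wt A a" and "wt B a"
    and "wt (fill K A) Omic"
    and "valid_in M (eq_expr a A B)"
    and "valid_in M (fill K A)"
  shows "valid_in M (fill K B)"
proof -
  have "Val M \<phi> (fill K A) = Val M \<phi> (fill K B)" if "assignment M \<phi>" for \<phi>
    using Val_fill_cong[OF assms(1-3) valid_eq_expr_Val_eq[OF assms(1,5,2,3)] assms(4) that] .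
  then show ?thesis
    using assms(6) unfolding valid_in_def by simp
qed

end
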